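(* Let $H$ be a graph with $h$ vertices and $m$ edges. Let $G'$ be a $k$-partite $(\epsilon,p)$-graph with vertex classes $(U_1,\dots,U_k)$, $|U_i|=n$ for all $i$, and let $G$ be a graph on $V(G')$ such that for every $i\ne j$ with $d_{G'}(U_i,U_j)>0$, the bipartite graph $G[U_i,U_j]$ is $\delta$-close to $G'[U_i,U_j]$. Suppose $\delta\le 1/(2m)$, $\epsilon\le (p^{m+1}/(32h^4))^2$ and $n\ge 4h^{h+3}/p^m$. If $G'$ contains a copy of $H$, then the number of copies of $H$ in $G$ is at least $$\frac{1-\delta m}{2}\cdot p^m n^h .$$
   Context: $d_G(A,B)=e_G(A,B)/(|A||B|)$ where $e_G(A,B)$ counts pairs $(u,v)\in A\times B$ with $uv\in E(G)$. A pair $(A,B)$ is $\epsilon$-regular if $|d(A,B)-d(A',B')|\le\epsilon$ for all $A'\subseteq A$, $B'\subseteq B$ with $|A'|\ge\epsilon|A|$, $|B'|\ge\epsilon|B|$. A graph is an $(\epsilon,p)$-graph if it is multipartite and the bipartite graph between any pair of its classes is either empty or $\epsilon$-regular of density at least $p$. $G[U_i,U_j]$ is the bipartite subgraph of $G$ consisting of the edges between $U_i$ and $U_j$. A graph $F_1$ on vertex set $W$ is $\delta$-close to a graph $F_2=(W,E_2)$ if $|E(F_1)\triangle E_2|\le\delta|E_2|$. *)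

theory Defs
  imports Complex_Main "HOL-Library.FuncSet"
begin

definition graph :: "'a set \<Rightarrow> 'a set set \<Rightarrow> bool" where
  "graph V E \<longleftrightarrow> finite V \<and> (\<forall>e\<in>E. e \<subseteq> V \<and> card e = 2)"

definition edge_count :: "'a set set \<Rightarrow> 'a set \<Rightarrow> 'a set \<Rightarrow> nat" where
  "edge_count E A B = card {(u, v). u \<in> A \<and> v \<in> B \<and> {u, v} \<in> E}"

definition density :: "'a set set \<Rightarrow> 'a set \<Rightarrow> 'a set \<Rightarrow> real" where
  "density E A B = real (edge_count E A B) / (real (card A) * real (card B))"

definition eps_regular :: "'a set set \<Rightarrow> real \<Rightarrow> 'a set \<Rightarrow> 'a set \<Rightarrow> bool" where
  "eps_regular E \<epsilon> A B \<longleftrightarrow>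
     (\<forall>A' B'. A' \<subseteq> A \<and> B' \<subseteq> B \<and> real (card A') \<ge> \<epsilon> * real (card A)
        \<and> real (card B') \<ge> \<epsilon> * real (card B)
        \<longrightarrow> \<bar>density E A B - density E A' B'\<bar> \<le> \<epsilon>)"

definition bip_edges :: "'a set set \<Rightarrow> 'a set \<Rightarrow> 'a set \<Rightarrow> 'a set set" where
  "bip_edges E A B = {e \<in> E. \<exists>u v. u \<in> A \<and> v \<in> B \<and> e = {u, v}}"

definition delta_close :: "real \<Rightarrow> 'a set set \<Rightarrow> 'a set set \<Rightarrow> bool" where
  "delta_close \<delta> E1 E2 \<longleftrightarrow> real (card ((E1 - E2) \<union> (E2 - E1))) \<le> \<delta> * real (card E2)"

definition k_partite :: "nat \<Rightarrow> (nat \<Rightarrow> 'a set) \<Rightarrow> 'a set \<Rightarrow> 'a set set \<Rightarrow> bool" where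
  "k_partite k U V E \<longleftrightarrow> graph V E \<and> V = (\<Union>i<k. U i)
     \<and> (\<forall>i<k. \<forall>j<k. i \<noteq> j \<longrightarrow> U i \<inter> U j = {})
     \<and> (\<forall>e\<in>E. \<forall>i<k. \<not> e \<subseteq> U i)"

definition eps_p_graph :: "real \<Rightarrow> real \<Rightarrow> nat \<Rightarrow> (nat \<Rightarrow> 'a set) \<Rightarrow> 'a set \<Rightarrow> 'a set set \<Rightarrow> bool" where
  "eps_p_graph \<epsilon> p k U V E \<longleftrightarrow> k_partite k U V E \<and>
     (\<forall>i<k. \<forall>j<k. i \<noteq> j \<longrightarrow>
        bip_edges E (U i) (U j) = {} \<or>
        (eps_regular E \<epsilon> (U i) (U j) \<and> density E (U i) (U j) \<ge> p))"

text \<open>Labelled copies of H = (VH,EH) in G = (V,E): injective maps V(H) -> V(G) sending edges to edges.\<close>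
definition copies :: "'b set \<Rightarrow> 'b set set \<Rightarrow> 'a set \<Rightarrow> 'a set set \<Rightarrow> ('b \<Rightarrow> 'a) set" where
  "copies VH EH V E = {f \<in> VH \<rightarrow>\<^sub>E V. inj_on f VH \<and> (\<forall>e\<in>EH. f ` e \<in> E)}"

end

theory Submission
  imports Defs
begin

text \<open>
  Fix a copy of H in G' and let C x be the class of G' containing the image of the vertex x. Among
  the n^h maps sending each x into C x, add the edges of H one at a time as constraints:
  \<epsilon>-regularity shows that each new edge multiplies the number of admissible maps by the density of
  its pair of classes, up to an error of \<epsilon> n^h. Hence at least about p^m n^h of the maps are
  homomorphisms into G'. The same count, with one edge forced onto the at most \<delta> e(U_i, U_j)
  pairs that are edges of G' but not of G, bounds the homomorphisms that miss an edge of G by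
  \<delta> p^m n^h (up to the same errors) per edge, and at most h^2 n^(h-1) maps are not injective.
  The hypotheses on \<epsilon> and n make all error terms together at most p^m n^h / 4.
\<close>

lemma sum_PiE_insert:
  assumes "x \<notin> X"
  shows "(\<Sum>f\<in>PiE (insert x X) C. F f) = (\<Sum>g\<in>PiE X C. \<Sum>a\<in>C x. F (g(x := a)))"
proof -
  have "(\<Sum>f\<in>PiE (insert x X) C. F f) = (\<Sum>(a, g)\<in>C x \<times> PiE X C. F (g(x := a)))"
    unfolding PiE_insert_eq by (subst sum.reindex[OF inj_combinator[OF assms]]) (simp add: case_prod_unfold)
  also have "\<dots> = (\<Sum>g\<in>PiE X C. \<Sum>a\<in>C x. F (g(x := a)))"
    by (simp add: sum.cartesian_product[symmetric] sum.swap[of _ "C x"])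
  finally show ?thesis .
qed

lemma sum_PiE_split_pair:
  assumes "x \<in> X" "y \<in> X" "x \<noteq> y"
  shows "(\<Sum>f\<in>PiE X C. F f) = (\<Sum>g\<in>PiE (X - {x, y}) C. \<Sum>a\<in>C x. \<Sum>b\<in>C y. F (g(y := b, x := a)))"
proof -
  have X: "X = insert x (insert y (X - {x, y}))" using assms by auto
  have "(\<Sum>f\<in>PiE X C. F f) = (\<Sum>g\<in>PiE (insert y (X - {x, y})) C. \<Sum>a\<in>C x. F (g(x := a)))"
    by (subst X, rule sum_PiE_insert) (use assms in auto)
  also have "\<dots> = (\<Sum>g\<in>PiE (X - {x, y}) C. \<Sum>b\<in>C y. \<Sum>a\<in>C x. F (g(y := b, x := a)))"
    by (rule sum_PiE_insert) auto
  finally show ?thesis by (simp add: sum.swap[of _ "C y"])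
qed

lemma card_PiE_const:
  "finite X \<Longrightarrow> (\<And>x. x \<in> X \<Longrightarrow> card (C x) = n) \<Longrightarrow> card (PiE X C) = n ^ card X"
  by (simp add: card_PiE)

lemma card_filter_eq_sum_indicator:
  "finite A \<Longrightarrow> real (card {x \<in> A. P x}) = (\<Sum>x\<in>A. if P x then 1 else 0)"
  by (simp add: sum.If_cases Int_def conj_commute)

lemma sum_sum_indicator_eq_card:
  assumes "finite A" "finite B"
  shows "(\<Sum>a\<in>A. \<Sum>b\<in>B. if P a b then 1 else 0::real) = real (card {(a, b). a \<in> A \<and> b \<in> B \<and> P a b})"
proof -
  have "{(a, b). a \<in> A \<and> b \<in> B \<and> P a b} = {z \<in> A \<times> B. P (fst z) (snd z)}" by auto
  then show ?thesis
    using assms by (simp add: card_filter_eq_sum_indicator sum.cartesian_product case_prod_unfold)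
qed

lemma edge_count_le_card_mult:
  assumes "finite A" "finite B"
  shows "edge_count E A B \<le> card A * card B"
proof -
  have "edge_count E A B \<le> card (A \<times> B)"
    unfolding edge_count_def using assms by (intro card_mono) auto
  then show ?thesis by (simp add: card_cartesian_product)
qed

lemma edge_count_eq_density_mult:
  assumes "finite A" "finite B"
  shows "real (edge_count E A B) = density E A B * real (card A) * real (card B)"
proof (cases "card A = 0 \<or> card B = 0")
  case True
  then have "edge_count E A B = 0" using edge_count_le_card_mult[OF assms, of E] by auto
  then show ?thesis by (simp add: density_def)
qed (simp add: density_def)

lemma density_nonneg: "0 \<le> density E A B"
  by (simp add: density_def)

lemma density_le_1:
  assumes "finite A" "finite B"
  shows "density E A B \<le> 1"
  using edge_count_le_card_mult[OF assms, of E]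
  by (auto simp: density_def divide_le_eq_1 simp flip: of_nat_mult)

lemma eps_regular_edge_count_deviation:
  assumes reg: "eps_regular E \<epsilon> A B" and fin: "finite A" "finite B"
    and sub: "A' \<subseteq> A" "B' \<subseteq> B"
  shows "\<bar>real (edge_count E A' B') - density E A B * real (card A') * real (card B')\<bar>
           \<le> \<epsilon> * real (card A) * real (card B)"
proof -
  have fin': "finite A'" "finite B'" using fin sub finite_subset by auto
  have le: "card A' \<le> card A" "card B' \<le> card B" using fin sub by (auto intro: card_mono)
  show ?thesis
  proof (cases "\<epsilon> * real (card A) \<le> real (card A') \<and> \<epsilon> * real (card B) \<le> real (card B')")
    case True
    then have "\<bar>density E A B - density E A' B'\<bar> \<le> \<epsilon>"
      using reg sub unfolding eps_regular_def by blast
    then have "\<bar>density E A B - density E A' B'\<bar> * (real (card A') * real (card B'))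
               \<le> \<epsilon> * (real (card A) * real (card B))"
      using le by (intro mult_mono) (auto intro: mult_mono)
    then show ?thesis
      by (simp add: edge_count_eq_density_mult[OF fin'] abs_minus_commute flip: abs_mult_pos left_diff_distrib mult.assoc)
  next
    case False
    \<comment> \<open>A small pair of subsets: both counts lie in [0, |A'||B'|] and |A'||B'| \<le> \<epsilon>|A||B|.\<close>
    then consider "real (card A') < \<epsilon> * real (card A)" | "real (card B') < \<epsilon> * real (card B)"
      by linarith
    then have small: "real (card A') * real (card B') \<le> \<epsilon> * real (card A) * real (card B)"
    proof cases
      case 1
      then have "real (card A') * real (card B') \<le> (\<epsilon> * real (card A)) * real (card B)"
        using le by (intro mult_mono) auto
      then show ?thesis by simp
    next
      case 2
      then have "real (card A') * real (card B') \<le> real (card A) * (\<epsilon> * real (card B))"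
        using le by (intro mult_mono) auto
      then show ?thesis by (simp add: mult_ac)
    qed
    have "real (edge_count E A' B') \<le> real (card A') * real (card B')"
      using edge_count_le_card_mult[OF fin', of E] by (simp flip: of_nat_mult)
    moreover have "density E A B * real (card A') * real (card B') \<le> real (card A') * real (card B')"
      using density_le_1[OF fin, of E] by (simp add: mult.assoc mult_left_le_one_le density_nonneg)
    moreover have "0 \<le> density E A B * real (card A') * real (card B')"
      by (simp add: density_nonneg)
    ultimately show ?thesis using small by (simp add: abs_le_iff)
  qed
qed

lemma card_missing_edge_pairs_le:
  assumes disj: "A \<inter> B = {}" and fin: "finite A" "finite B"
    and close: "delta_close \<delta> (bip_edges E A B) (bip_edges E' A B)" and "0 \<le> \<delta>"
  shows "real (card {(a, b). a \<in> A \<and> b \<in> B \<and> {a, b} \<in> E' - E}) \<le> \<delta> * real (edge_count E' A B)"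
proof -
  let ?pair = "\<lambda>(a, b). {a, b}"
  let ?missing = "{(a, b). a \<in> A \<and> b \<in> B \<and> {a, b} \<in> E' - E}"
  have bip_eq: "bip_edges F A B = ?pair ` {(a, b). a \<in> A \<and> b \<in> B \<and> {a, b} \<in> F}" for F
    unfolding bip_edges_def by auto
  have fin_pairs: "finite {(a, b). a \<in> A \<and> b \<in> B \<and> P a b}" for P
    by (rule finite_subset[of _ "A \<times> B"]) (use fin in auto)
  have fin_bip: "finite (bip_edges F A B)" for F
    unfolding bip_eq by (intro finite_imageI fin_pairs)
  have "inj_on ?pair ?missing"
    using disj by (auto simp: inj_on_def doubleton_eq_iff)
  then have "card ?missing = card (?pair ` ?missing)" by (simp add: card_image)
  also have "\<dots> \<le> card (bip_edges E' A B - bip_edges E A B)"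
    by (intro card_mono finite_Diff fin_bip) (auto simp: bip_edges_def)
  also have "\<dots> \<le> card ((bip_edges E A B - bip_edges E' A B) \<union> (bip_edges E' A B - bip_edges E A B))"
    by (intro card_mono) (auto simp: fin_bip)
  finally have "real (card ?missing) \<le> \<delta> * real (card (bip_edges E' A B))"
    using close unfolding delta_close_def by linarith
  also have "card (bip_edges E' A B) \<le> edge_count E' A B"
    unfolding bip_eq edge_count_def by (rule card_image_le[OF fin_pairs])
  then have "\<delta> * real (card (bip_edges E' A B)) \<le> \<delta> * real (edge_count E' A B)"
    using \<open>0 \<le> \<delta>\<close> by (intro mult_left_mono) auto
  finally show ?thesis .
qed

definition constrained_maps :: "'b set \<Rightarrow> ('b \<Rightarrow> 'a set) \<Rightarrow> 'b set set \<Rightarrow> ('b set \<Rightarrow> 'a set set) \<Rightarrow> ('b \<Rightarrow> 'a) set"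
  where "constrained_maps X C T S = {f \<in> PiE X C. \<forall>e\<in>T. f ` e \<in> S e}"

lemma fun_upd_image_notin: "z \<notin> e \<Longrightarrow> f(z := v) ` e = f ` e"
  by (auto intro: image_cong)

lemma constraints_split_at_pair:
  assumes "x \<noteq> y" and T: "\<And>e. e \<in> T \<Longrightarrow> card e = 2 \<and> e \<noteq> {x, y}"
  shows "(\<forall>e\<in>T. g(y := b, x := a) ` e \<in> S e) \<longleftrightarrow>
           (\<forall>e\<in>T. x \<notin> e \<longrightarrow> y \<notin> e \<longrightarrow> g ` e \<in> S e) \<and>
           (\<forall>e\<in>T. x \<in> e \<longrightarrow> g(x := a) ` e \<in> S e) \<and> (\<forall>e\<in>T. y \<in> e \<longrightarrow> g(y := b) ` e \<in> S e)"
proof -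
  have not_both: "\<not> (x \<in> e \<and> y \<in> e)" if "e \<in> T" for e
  proof
    assume "x \<in> e \<and> y \<in> e"
    moreover have "finite e" "card e = 2" using T[OF that] card.infinite by fastforce+
    ultimately have "{x, y} = e" using \<open>x \<noteq> y\<close> by (intro card_subset_eq) auto
    then show False using T[OF that] by simp
  qed
  have img: "g(y := b, x := a) ` e = (if x \<in> e then g(x := a) ` e else if y \<in> e then g(y := b) ` e else g ` e)"
    if "e \<in> T" for e
  proof (cases "x \<in> e")
    case True
    then have "y \<notin> e" using not_both[OF that] by blast
    have twist: "g(y := b, x := a) = g(x := a, y := b)" using \<open>x \<noteq> y\<close> by (metis fun_upd_twist)
    show ?thesis by (simp only: twist fun_upd_image_notin[OF \<open>y \<notin> e\<close>] True if_True)
  next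
    case False
    then show ?thesis
      using fun_upd_image_notin[OF False, of "g(y := b)" a] fun_upd_image_notin[of y e g b] by simp
  qed
  have "(\<forall>e\<in>T. g(y := b, x := a) ` e \<in> S e) \<longleftrightarrow>
        (\<forall>e\<in>T. (if x \<in> e then g(x := a) ` e else if y \<in> e then g(y := b) ` e else g ` e) \<in> S e)"
    by (intro ball_cong refl) (metis img)
  then show ?thesis using not_both by auto
qed

lemma constrained_fibre_deviation:
  assumes "x \<noteq> y" and fin: "finite (C x)" "finite (C y)"
    and T: "\<And>e. e \<in> T \<Longrightarrow> card e = 2 \<and> e \<noteq> {x, y}" and S: "S {x, y} = E"
    and dev: "\<And>A' B'. A' \<subseteq> C x \<Longrightarrow> B' \<subseteq> C y \<Longrightarrow>
                \<bar>real (edge_count E A' B') - d * real (card A') * real (card B')\<bar> \<le> \<eta>"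
  shows "\<bar>(\<Sum>a\<in>C x. \<Sum>b\<in>C y. if \<forall>e\<in>insert {x, y} T. g(y := b, x := a) ` e \<in> S e then 1 else 0)
          - d * (\<Sum>a\<in>C x. \<Sum>b\<in>C y. if \<forall>e\<in>T. g(y := b, x := a) ` e \<in> S e then 1 else 0)\<bar> \<le> \<eta>"
proof -
  \<comment> \<open>With g fixed off {x, y}, the constraints split into one independent of (a, b), one on a alone
     and one on b alone; adding {x, y} then counts the edges of E between the admissible sets A' and B'.\<close>
  define A' where "A' = {a \<in> C x. \<forall>e\<in>T. x \<in> e \<longrightarrow> g(x := a) ` e \<in> S e}"
  define B' where "B' = {b \<in> C y. \<forall>e\<in>T. y \<in> e \<longrightarrow> g(y := b) ` e \<in> S e}"
  define Q where "Q \<longleftrightarrow> (\<forall>e\<in>T. x \<notin> e \<longrightarrow> y \<notin> e \<longrightarrow> g ` e \<in> S e)"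
  have split: "(\<forall>e\<in>T. g(y := b, x := a) ` e \<in> S e) \<longleftrightarrow> Q \<and> a \<in> A' \<and> b \<in> B'"
    if "a \<in> C x" "b \<in> C y" for a b
    unfolding A'_def B'_def mem_Collect_eq
    by (simp only: constraints_split_at_pair[OF \<open>x \<noteq> y\<close> T] Q_def that simp_thms)
  have pair: "g(y := b, x := a) ` {x, y} = {a, b}" for a b
    using \<open>x \<noteq> y\<close> by auto
  have sub: "A' \<subseteq> C x" "B' \<subseteq> C y" unfolding A'_def B'_def by auto
  have "\<eta> \<ge> 0" using dev[of "{}" "{}"] by (simp add: edge_count_def)
  show ?thesis
  proof (cases Q)
    case True
    have "(\<Sum>a\<in>C x. \<Sum>b\<in>C y. if \<forall>e\<in>insert {x, y} T. g(y := b, x := a) ` e \<in> S e then 1 else 0)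
          = (\<Sum>a\<in>C x. \<Sum>b\<in>C y. if {a, b} \<in> E \<and> a \<in> A' \<and> b \<in> B' then 1 else 0)"
      by (intro sum.cong refl) (simp only: ball_simps(7) pair S split True simp_thms)
    also have "\<dots> = real (edge_count E A' B')"
    proof -
      have "{(a, b). a \<in> C x \<and> b \<in> C y \<and> {a, b} \<in> E \<and> a \<in> A' \<and> b \<in> B'}
            = {(a, b). a \<in> A' \<and> b \<in> B' \<and> {a, b} \<in> E}" using sub by blast
      then show ?thesis by (simp add: sum_sum_indicator_eq_card[OF fin] edge_count_def)
    qed
    finally have with_pair: "(\<Sum>a\<in>C x. \<Sum>b\<in>C y. if \<forall>e\<in>insert {x, y} T. g(y := b, x := a) ` e \<in> S e then 1 else 0)
          = real (edge_count E A' B')" .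
    have "(\<Sum>a\<in>C x. \<Sum>b\<in>C y. if \<forall>e\<in>T. g(y := b, x := a) ` e \<in> S e then 1 else 0)
          = (\<Sum>a\<in>C x. \<Sum>b\<in>C y. if a \<in> A' \<and> b \<in> B' then 1 else 0)"
      by (intro sum.cong refl) (simp only: split True simp_thms)
    also have "\<dots> = real (card (A' \<times> B'))"
    proof -
      have "{(a, b). a \<in> C x \<and> b \<in> C y \<and> a \<in> A' \<and> b \<in> B'} = A' \<times> B'" using sub by blast
      then show ?thesis by (simp add: sum_sum_indicator_eq_card[OF fin])
    qed
    finally show ?thesis
      using dev[OF sub] with_pair by (simp add: card_cartesian_product mult.assoc)
  next
    case False
    have violated: "\<not> (\<forall>e\<in>T'. g(y := b, x := a) ` e \<in> S e)"
      if "T \<subseteq> T'" "a \<in> C x" "b \<in> C y" for T' a b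
      using split[OF that(2,3)] False that(1) by blast
    have zero: "(\<Sum>a\<in>C x. \<Sum>b\<in>C y. if \<forall>e\<in>T'. g(y := b, x := a) ` e \<in> S e then 1 else 0) = (0::real)"
      if "T \<subseteq> T'" for T'
      by (intro sum.neutral ballI) (simp only: violated[OF that] if_False)
    show ?thesis
      using \<open>\<eta> \<ge> 0\<close> by (simp only: zero[OF subset_insertI] zero[OF order_refl])
  qed
qed

lemma card_constrained_maps_insert_pair:
  assumes xy: "x \<in> X" "y \<in> X" "x \<noteq> y" and fin: "finite X" "\<And>z. z \<in> X \<Longrightarrow> finite (C z)"
    and T: "\<And>e. e \<in> T \<Longrightarrow> card e = 2 \<and> e \<noteq> {x, y}" and S: "S {x, y} = E"
    and dev: "\<And>A' B'. A' \<subseteq> C x \<Longrightarrow> B' \<subseteq> C y \<Longrightarrow>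
                \<bar>real (edge_count E A' B') - d * real (card A') * real (card B')\<bar> \<le> \<eta>"
  shows "\<bar>real (card (constrained_maps X C (insert {x, y} T) S)) - d * real (card (constrained_maps X C T S))\<bar>
           \<le> real (card (PiE (X - {x, y}) C)) * \<eta>"
proof -
  let ?R = "PiE (X - {x, y}) C"
  let ?fibre = "\<lambda>T' g. \<Sum>a\<in>C x. \<Sum>b\<in>C y. if \<forall>e\<in>T'. g(y := b, x := a) ` e \<in> S e then 1 else 0 :: real"
  have count: "real (card (constrained_maps X C T' S)) = (\<Sum>g\<in>?R. ?fibre T' g)" for T'
  proof -
    have "finite (PiE X C)" using fin by (intro finite_PiE) auto
    then show ?thesis
      unfolding constrained_maps_def by (simp only: card_filter_eq_sum_indicator sum_PiE_split_pair[OF xy])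
  qed
  have "\<bar>(\<Sum>g\<in>?R. ?fibre (insert {x, y} T) g) - d * (\<Sum>g\<in>?R. ?fibre T g)\<bar>
        = \<bar>\<Sum>g\<in>?R. ?fibre (insert {x, y} T) g - d * ?fibre T g\<bar>"
    by (simp only: sum_subtractf sum_distrib_left)
  also have "\<dots> \<le> (\<Sum>g\<in>?R. \<bar>?fibre (insert {x, y} T) g - d * ?fibre T g\<bar>)"
    by (rule sum_abs)
  also have "\<dots> \<le> (\<Sum>g\<in>?R. \<eta>)"
    by (intro sum_mono constrained_fibre_deviation[where x=x and y=y and C=C and T=T and S=S and E=E,
          OF \<open>x \<noteq> y\<close> fin(2)[OF xy(1)] fin(2)[OF xy(2)] T S dev])
  finally show ?thesis by (simp add: count)
qed

lemma product_estimate_by_increments: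
  fixes N :: "'e set \<Rightarrow> real"
  assumes "finite T" "T0 \<inter> T = {}"
    and "\<And>e T'. e \<in> T \<Longrightarrow> T0 \<subseteq> T' \<Longrightarrow> T' \<subseteq> T0 \<union> T \<Longrightarrow> e \<notin> T' \<Longrightarrow>
           \<bar>N (insert e T') - d e * N T'\<bar> \<le> \<eta>"
    and "\<And>e. e \<in> T \<Longrightarrow> 0 \<le> d e \<and> d e \<le> 1"
  shows "\<bar>N (T0 \<union> T) - (\<Prod>e\<in>T. d e) * N T0\<bar> \<le> real (card T) * \<eta>"
  using assms
proof (induction T rule: finite_induct)
  case (insert e F)
  have step: "\<bar>N (insert e (T0 \<union> F)) - d e * N (T0 \<union> F)\<bar> \<le> \<eta>"
    using insert.prems insert.hyps(2) by (intro insert.prems(2)) auto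
  have step_F: "\<bar>N (insert e' T') - d e' * N T'\<bar> \<le> \<eta>"
    if "e' \<in> F" "T0 \<subseteq> T'" "T' \<subseteq> T0 \<union> F" "e' \<notin> T'" for e' T'
    using insert.prems(2) that by blast
  have IH: "\<bar>N (T0 \<union> F) - (\<Prod>e\<in>F. d e) * N T0\<bar> \<le> real (card F) * \<eta>"
    using insert.prems by (intro insert.IH[OF _ step_F]) auto
  have "\<bar>d e * N (T0 \<union> F) - d e * ((\<Prod>e\<in>F. d e) * N T0)\<bar> \<le> 1 * (real (card F) * \<eta>)"
    unfolding right_diff_distrib[symmetric] abs_mult using insert.prems(3) IH
    by (intro mult_mono) auto
  then show ?case
    using step insert.hyps by (simp add: algebra_simps)
qed simp

lemma card_constrained_maps_single_pair:
  assumes xy: "x \<in> X" "y \<in> X" "x \<noteq> y" and fin: "finite X" "\<And>z. z \<in> X \<Longrightarrow> finite (C z)"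
  shows "card (constrained_maps X C {{x, y}} S)
           = card (PiE (X - {x, y}) C) * card {(a, b). a \<in> C x \<and> b \<in> C y \<and> {a, b} \<in> S {x, y}}"
proof -
  have "finite (PiE X C)" using fin by (intro finite_PiE) auto
  then have "real (card (constrained_maps X C {{x, y}} S)) = (\<Sum>g\<in>PiE (X - {x, y}) C.
               \<Sum>a\<in>C x. \<Sum>b\<in>C y. if \<forall>e\<in>{{x, y}}. g(y := b, x := a) ` e \<in> S e then 1 else 0)"
    unfolding constrained_maps_def by (simp only: card_filter_eq_sum_indicator sum_PiE_split_pair[OF xy])
  also have "\<dots> = (\<Sum>g\<in>PiE (X - {x, y}) C. \<Sum>a\<in>C x. \<Sum>b\<in>C y. if {a, b} \<in> S {x, y} then 1 else 0)"
    using \<open>x \<noteq> y\<close> by (intro sum.cong refl) (simp only: ball_simps(5,7) simp_thms, simp add: insert_commute)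
  also have "\<dots> = real (card (PiE (X - {x, y}) C)) * real (card {(a, b). a \<in> C x \<and> b \<in> C y \<and> {a, b} \<in> S {x, y}})"
    using fin xy by (simp add: sum_sum_indicator_eq_card)
  finally show ?thesis by (simp flip: of_nat_mult)
qed

lemma card_PiE_coinciding_le:
  assumes xy: "x \<in> X" "y \<in> X" "x \<noteq> y" and fin: "finite X" "\<And>z. z \<in> X \<Longrightarrow> finite (C z)"
  shows "card {f \<in> PiE X C. f x = f y} \<le> card (PiE (X - {x, y}) C) * card (C x)"
proof -
  have "finite (PiE X C)" using fin by (intro finite_PiE) auto
  then have "real (card {f \<in> PiE X C. f x = f y})
             = (\<Sum>g\<in>PiE (X - {x, y}) C. \<Sum>a\<in>C x. \<Sum>b\<in>C y. if a = b then 1 else 0)"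
    using \<open>x \<noteq> y\<close> by (simp add: card_filter_eq_sum_indicator sum_PiE_split_pair[OF xy])
  also have "\<dots> \<le> (\<Sum>g\<in>PiE (X - {x, y}) C. \<Sum>a\<in>C x. 1)"
    using fin(2)[OF xy(2)] by (intro sum_mono) (simp add: sum.delta)
  finally show ?thesis by (simp flip: of_nat_mult)
qed

locale regular_class_assignment =
  fixes VH :: "'b set" and EH :: "'b set set" and C :: "'b \<Rightarrow> 'a set"
    and E' E :: "'a set set" and n :: nat and \<epsilon> p \<delta> :: real
  assumes graph_H: "graph VH EH"
    and finite_class: "\<And>x. x \<in> VH \<Longrightarrow> finite (C x)"
    and card_class: "\<And>x. x \<in> VH \<Longrightarrow> card (C x) = n"
    and classes_disjoint: "\<And>x y. {x, y} \<in> EH \<Longrightarrow> x \<noteq> y \<Longrightarrow> C x \<inter> C y = {}"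
    and classes_regular: "\<And>x y. {x, y} \<in> EH \<Longrightarrow> x \<noteq> y \<Longrightarrow> eps_regular E' \<epsilon> (C x) (C y)"
    and classes_dense: "\<And>x y. {x, y} \<in> EH \<Longrightarrow> x \<noteq> y \<Longrightarrow> p \<le> density E' (C x) (C y)"
    and classes_close: "\<And>x y. {x, y} \<in> EH \<Longrightarrow> x \<noteq> y \<Longrightarrow>
                          delta_close \<delta> (bip_edges E (C x) (C y)) (bip_edges E' (C x) (C y))"
    and eps_nonneg: "0 \<le> \<epsilon>" and delta_nonneg: "0 \<le> \<delta>"
begin

lemma finite_VH: "finite VH" and edges_H: "\<And>e. e \<in> EH \<Longrightarrow> e \<subseteq> VH \<and> card e = 2"
  using graph_H unfolding graph_def by auto

lemma finite_EH: "finite EH"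
  using finite_VH edges_H by (meson Pow_iff finite_Pow_iff rev_finite_subset subsetI)

lemma finite_PiE_classes: "finite (PiE VH C)"
  using finite_VH finite_class by (intro finite_PiE)

lemma two_le_card_VH: "x \<in> VH \<Longrightarrow> y \<in> VH \<Longrightarrow> x \<noteq> y \<Longrightarrow> 2 \<le> card VH"
  using card_mono[OF finite_VH, of "{x, y}"] by simp

lemma card_PiE_classes_minus_pair:
  assumes "x \<in> VH" "y \<in> VH" "x \<noteq> y"
  shows "card (PiE (VH - {x, y}) C) = n ^ (card VH - 2)"
  using assms finite_VH card_class by (subst card_PiE_const) (auto simp: card_Diff_subset numeral_2_eq_2)

lemma pow_card_VH_minus_2:
  assumes "x \<in> VH" "y \<in> VH" "x \<noteq> y"
  shows "(r::real) ^ (card VH - 2) * r ^ 2 = r ^ card VH"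
  using two_le_card_VH[OF assms] by (metis le_add_diff_inverse2 power_add)

text \<open>SOME picks an ordering of the ends of e; any choice works, as the locale assumptions hold for both.\<close>
definition edge_density :: "'b set \<Rightarrow> real" where
  "edge_density e = (case SOME (x, y). e = {x, y} \<and> x \<noteq> y of (x, y) \<Rightarrow> density E' (C x) (C y))"

lemma obtain_edge_ends:
  assumes "e \<in> EH"
  obtains x y where "e = {x, y}" "x \<noteq> y" "x \<in> VH" "y \<in> VH" "edge_density e = density E' (C x) (C y)"
proof -
  have "\<exists>x y. e = {x, y} \<and> x \<noteq> y" using edges_H[OF assms] by (simp add: card_2_iff)
  then have "case SOME (x, y). e = {x, y} \<and> x \<noteq> y of (x, y) \<Rightarrow> e = {x, y} \<and> x \<noteq> y"
    by (intro someI_ex[where P = "\<lambda>(x, y). e = {x, y} \<and> x \<noteq> y"]) auto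
  then show ?thesis
    using that edges_H[OF assms] unfolding edge_density_def by (auto split: prod.splits)
qed

lemma edge_density_nonneg: "0 \<le> edge_density e"
  by (simp add: edge_density_def density_nonneg split: prod.split)

lemma edge_density_ge: "e \<in> EH \<Longrightarrow> p \<le> edge_density e"
  by (metis obtain_edge_ends classes_dense)

lemma edge_density_le_1: "e \<in> EH \<Longrightarrow> edge_density e \<le> 1"
  by (metis obtain_edge_ends density_le_1 finite_class)

lemma card_constrained_maps_insert_edge:
  assumes "e \<in> EH" "T \<subseteq> EH" "e \<notin> T" "S e = E'"
  shows "\<bar>real (card (constrained_maps VH C (insert e T) S))
           - edge_density e * real (card (constrained_maps VH C T S))\<bar> \<le> \<epsilon> * real n ^ card VH"
proof -
  obtain x y where e: "e = {x, y}" "x \<noteq> y" "x \<in> VH" "y \<in> VH"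
    and d: "edge_density e = density E' (C x) (C y)"
    using obtain_edge_ends[OF \<open>e \<in> EH\<close>] .
  have "\<bar>real (card (constrained_maps VH C (insert {x, y} T) S))
          - edge_density e * real (card (constrained_maps VH C T S))\<bar>
        \<le> real (card (PiE (VH - {x, y}) C)) * (\<epsilon> * real n * real n)"
  proof (rule card_constrained_maps_insert_pair)
    show "\<bar>real (edge_count E' A' B') - edge_density e * real (card A') * real (card B')\<bar> \<le> \<epsilon> * real n * real n"
      if "A' \<subseteq> C x" "B' \<subseteq> C y" for A' B'
      using eps_regular_edge_count_deviation[OF classes_regular _ _ that] \<open>e \<in> EH\<close> e card_class finite_class d
      by auto
  qed (use assms e edges_H finite_VH finite_class in auto)
  also have "\<dots> = \<epsilon> * real n ^ card VH"
    using card_PiE_classes_minus_pair[OF e(3,4,2)] pow_card_VH_minus_2[OF e(3,4,2), of "real n"]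
    by (simp add: power2_eq_square mult_ac)
  finally show ?thesis using e by simp
qed

lemma edge_density_bounds: "e \<in> EH \<Longrightarrow> 0 \<le> edge_density e \<and> edge_density e \<le> 1"
  using edge_density_nonneg edge_density_le_1 by blast

lemma card_constrained_maps_empty: "card (constrained_maps VH C {} S) = n ^ card VH"
  using finite_VH card_class by (simp add: constrained_maps_def card_PiE_const)

lemma homomorphism_count_ge:
  "(\<Prod>e\<in>EH. edge_density e) * real n ^ card VH - real (card EH) * (\<epsilon> * real n ^ card VH)
     \<le> real (card (constrained_maps VH C EH (\<lambda>_. E')))"
proof -
  have "\<bar>real (card (constrained_maps VH C ({} \<union> EH) (\<lambda>_. E')))
          - (\<Prod>e\<in>EH. edge_density e) * real (card (constrained_maps VH C {} (\<lambda>_. E')))\<bar>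
        \<le> real (card EH) * (\<epsilon> * real n ^ card VH)"
    using finite_EH card_constrained_maps_insert_edge edge_density_bounds
    by (intro product_estimate_by_increments) auto
  then show ?thesis by (simp add: card_constrained_maps_empty abs_le_iff)
qed

lemma missing_edge_count_le:
  assumes "e0 \<in> EH"
  shows "real (card (constrained_maps VH C EH ((\<lambda>_. E')(e0 := E' - E))))
           \<le> \<delta> * (\<Prod>e\<in>EH. edge_density e) * real n ^ card VH + real (card EH) * (\<epsilon> * real n ^ card VH)"
proof -
  define S where "S = (\<lambda>_. E')(e0 := E' - E)"
  define P' where "P' = (\<Prod>e\<in>EH - {e0}. edge_density e)"
  obtain x y where e0: "e0 = {x, y}" "x \<noteq> y" "x \<in> VH" "y \<in> VH"
    and d: "edge_density e0 = density E' (C x) (C y)"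
    using obtain_edge_ends[OF assms] .
  have "\<bar>real (card (constrained_maps VH C ({e0} \<union> (EH - {e0})) S))
          - P' * real (card (constrained_maps VH C {e0} S))\<bar>
        \<le> real (card (EH - {e0})) * (\<epsilon> * real n ^ card VH)"
    unfolding P'_def using assms finite_EH edge_density_bounds
    by (intro product_estimate_by_increments card_constrained_maps_insert_edge) (auto simp: S_def)
  also have "\<dots> \<le> real (card EH) * (\<epsilon> * real n ^ card VH)"
    using finite_EH eps_nonneg by (intro mult_right_mono) (auto intro: card_mono)
  finally have estimate: "real (card (constrained_maps VH C EH S))
      \<le> P' * real (card (constrained_maps VH C {e0} S)) + real (card EH) * (\<epsilon> * real n ^ card VH)"
    using assms by (simp add: insert_absorb abs_le_iff)
  have single: "real (card (constrained_maps VH C {e0} S)) \<le> \<delta> * edge_density e0 * real n ^ card VH"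
  proof -
    have "real (card {(a, b). a \<in> C x \<and> b \<in> C y \<and> {a, b} \<in> E' - E})
          \<le> \<delta> * real (edge_count E' (C x) (C y))"
      using e0 assms classes_disjoint classes_close finite_class delta_nonneg
      by (intro card_missing_edge_pairs_le) auto
    also have "\<dots> = \<delta> * edge_density e0 * real n ^ 2"
      using e0 d finite_class card_class by (simp add: edge_count_eq_density_mult power2_eq_square)
    finally have "real (card (PiE (VH - {x, y}) C)) * real (card {(a, b). a \<in> C x \<and> b \<in> C y \<and> {a, b} \<in> E' - E})
                  \<le> real n ^ (card VH - 2) * (\<delta> * edge_density e0 * real n ^ 2)"
      using card_PiE_classes_minus_pair[OF e0(3,4,2)] by (simp add: mult_left_mono)
    also have "\<dots> = \<delta> * edge_density e0 * real n ^ card VH"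
      using pow_card_VH_minus_2[OF e0(3,4,2)] by (simp add: mult_ac)
    finally show ?thesis
      using e0 finite_VH finite_class by (simp add: card_constrained_maps_single_pair S_def)
  qed
  have "P' * real (card (constrained_maps VH C {e0} S)) \<le> P' * (\<delta> * edge_density e0 * real n ^ card VH)"
    using single by (intro mult_left_mono) (simp_all add: P'_def prod_nonneg edge_density_nonneg)
  also have "\<dots> = \<delta> * (\<Prod>e\<in>EH. edge_density e) * real n ^ card VH"
    unfolding P'_def prod.remove[OF finite_EH assms] by (simp add: mult_ac)
  finally show ?thesis using estimate unfolding S_def by linarith
qed

lemma noninjective_count_le:
  "card {f \<in> PiE VH C. \<not> inj_on f VH} \<le> card VH * (card VH - 1) * n ^ (card VH - 1)"
proof -
  let ?coinciding = "\<lambda>x y. {f \<in> PiE VH C. f x = f y}"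
  have coinciding_le: "card (?coinciding x y) \<le> n ^ (card VH - 1)" if "x \<in> VH" "y \<in> VH - {x}" for x y
  proof -
    have "card (?coinciding x y) \<le> n ^ (card VH - 2) * n"
      using card_PiE_coinciding_le[of x VH y C] that finite_VH finite_class card_class
      by (auto simp: card_PiE_classes_minus_pair)
    moreover have "2 \<le> card VH" using two_le_card_VH[of x y] that by auto
    then have "card VH - 1 = Suc (card VH - 2)" by arith
    ultimately show ?thesis by (simp add: mult.commute)
  qed
  have "{f \<in> PiE VH C. \<not> inj_on f VH} \<subseteq> (\<Union>x\<in>VH. \<Union>y\<in>VH - {x}. ?coinciding x y)"
    by (auto simp: inj_on_def)
  then have "card {f \<in> PiE VH C. \<not> inj_on f VH} \<le> card (\<Union>x\<in>VH. \<Union>y\<in>VH - {x}. ?coinciding x y)"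
    using finite_VH finite_PiE_classes by (intro card_mono) auto
  also have "\<dots> \<le> (\<Sum>x\<in>VH. card (\<Union>y\<in>VH - {x}. ?coinciding x y))"
    by (rule card_UN_le[OF finite_VH])
  also have "\<dots> \<le> (\<Sum>x\<in>VH. \<Sum>y\<in>VH - {x}. card (?coinciding x y))"
    using finite_VH by (intro sum_mono card_UN_le) auto
  also have "\<dots> \<le> (\<Sum>x\<in>VH. \<Sum>y\<in>VH - {x}. n ^ (card VH - 1))"
    by (intro sum_mono coinciding_le)
  also have "\<dots> = card VH * (card VH - 1) * n ^ (card VH - 1)"
    using finite_VH by simp
  finally show ?thesis .
qed

lemma embedding_count_ge:
  defines "N \<equiv> real n ^ card VH" and "P \<equiv> \<Prod>e\<in>EH. edge_density e" and "m \<equiv> real (card EH)"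
  shows "P * N - m * (\<epsilon> * N) - m * (\<delta> * P * N + m * (\<epsilon> * N))
           - real (card VH * (card VH - 1)) * real n ^ (card VH - 1)
         \<le> real (card {f \<in> PiE VH C. inj_on f VH \<and> (\<forall>e\<in>EH. f ` e \<in> E)})"
proof -
  let ?good = "{f \<in> PiE VH C. inj_on f VH \<and> (\<forall>e\<in>EH. f ` e \<in> E)}"
  let ?missing = "\<lambda>e0. constrained_maps VH C EH ((\<lambda>_. E')(e0 := E' - E))"
  let ?noninj = "{f \<in> PiE VH C. \<not> inj_on f VH}"
  have fin: "finite ?good" "finite ?noninj" "\<And>e0. finite (?missing e0)"
    using finite_PiE_classes by (auto simp: constrained_maps_def)
  have "constrained_maps VH C EH (\<lambda>_. E') \<subseteq> ?good \<union> (\<Union>e0\<in>EH. ?missing e0) \<union> ?noninj"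
  proof
    fix f assume hom: "f \<in> constrained_maps VH C EH (\<lambda>_. E')"
    show "f \<in> ?good \<union> (\<Union>e0\<in>EH. ?missing e0) \<union> ?noninj"
    proof (cases "inj_on f VH \<and> (\<forall>e\<in>EH. f ` e \<in> E)")
      case True
      then show ?thesis using hom by (simp add: constrained_maps_def)
    next
      case False
      show ?thesis
      proof (cases "inj_on f VH")
        case True
        with False obtain e0 where "e0 \<in> EH" "f ` e0 \<notin> E" by blast
        then have "f \<in> ?missing e0" using hom by (simp add: constrained_maps_def)
        then show ?thesis using \<open>e0 \<in> EH\<close> by blast
      qed (use hom in \<open>simp add: constrained_maps_def\<close>)
    qed
  qed
  then have "card (constrained_maps VH C EH (\<lambda>_. E'))
             \<le> card (?good \<union> (\<Union>e0\<in>EH. ?missing e0) \<union> ?noninj)"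
    using fin finite_EH by (intro card_mono) auto
  also have "\<dots> \<le> card ?good + card (\<Union>e0\<in>EH. ?missing e0) + card ?noninj"
    by (meson add_mono card_Un_le le_refl order_trans)
  also have "\<dots> \<le> card ?good + (\<Sum>e0\<in>EH. card (?missing e0)) + card ?noninj"
    using finite_EH by (simp add: card_UN_le)
  finally have union_bound: "real (card (constrained_maps VH C EH (\<lambda>_. E')))
             \<le> real (card ?good) + (\<Sum>e0\<in>EH. real (card (?missing e0))) + real (card ?noninj)"
    by (simp flip: of_nat_sum of_nat_add)
  have "(\<Sum>e0\<in>EH. real (card (?missing e0))) \<le> (\<Sum>e0\<in>EH. \<delta> * P * N + m * (\<epsilon> * N))"
    unfolding m_def P_def N_def by (intro sum_mono missing_edge_count_le)
  moreover have "real (card ?noninj) \<le> real (card VH * (card VH - 1)) * real n ^ (card VH - 1)"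
    using noninjective_count_le by (simp flip: of_nat_mult of_nat_power)
  moreover have "(\<Sum>e0\<in>EH. \<delta> * P * N + m * (\<epsilon> * N)) = m * (\<delta> * P * N + m * (\<epsilon> * N))"
    by (simp add: m_def)
  ultimately show ?thesis
    using union_bound homomorphism_count_ge unfolding N_def P_def m_def by linarith
qed

lemma card_EH_le: "card EH \<le> card VH ^ 2"
proof -
  have "card EH \<le> card {B. B \<subseteq> VH \<and> card B = 2}"
    using finite_VH edges_H by (intro card_mono) auto
  also have "\<dots> = card VH choose 2" by (rule n_subsets[OF finite_VH])
  also have "\<dots> \<le> card VH ^ 2"
    by (cases "2 \<le> card VH") (simp_all add: binomial_le_pow binomial_eq_0)
  finally show ?thesis .
qed

lemma density_product_ge: "0 \<le> p \<Longrightarrow> p ^ card EH \<le> (\<Prod>e\<in>EH. edge_density e)"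
  using prod_mono[of EH "\<lambda>_. p" edge_density] edge_density_ge by simp

end

lemma regularity_error_le:
  fixes p \<epsilon> :: real and m h :: nat
  assumes "0 < p" "p \<le> 1" "0 \<le> \<epsilon>" "\<epsilon> \<le> (p ^ (m + 1) / (32 * real h ^ 4)) ^ 2"
    and "1 \<le> h" "m \<le> h ^ 2"
  shows "(real m + real m ^ 2) * \<epsilon> \<le> p ^ m / 8"
proof -
  have h: "1 \<le> real h" using assms(5) by simp
  have "(p ^ (m + 1)) ^ 2 = p ^ m * p ^ (m + 2)"
    by (simp add: power2_eq_square)
  also have "\<dots> \<le> p ^ m"
    using assms(1,2) by (intro mult_left_le power_le_one) auto
  finally have "(p ^ (m + 1)) ^ 2 / (1024 * real h ^ 8) \<le> p ^ m / (1024 * real h ^ 8)"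
    by (rule divide_right_mono) simp
  moreover have "(p ^ (m + 1) / (32 * real h ^ 4)) ^ 2 = (p ^ (m + 1)) ^ 2 / (1024 * real h ^ 8)"
    by (simp add: power_divide power_mult_distrib flip: power_mult)
  ultimately have "\<epsilon> \<le> p ^ m / (1024 * real h ^ 8)"
    using assms(4) by linarith
  moreover have "real m + real m ^ 2 \<le> 2 * real h ^ 4"
  proof -
    have "real m \<le> real h ^ 2" using assms(6) by (simp flip: of_nat_power)
    moreover have "real h ^ 2 \<le> real h ^ 4" using h by (intro power_increasing) auto
    moreover have "real m ^ 2 \<le> (real h ^ 2) ^ 2"
      using \<open>real m \<le> real h ^ 2\<close> by (intro power_mono) auto
    moreover have "(real h ^ 2) ^ 2 = real h ^ 4" by (simp flip: power_mult)
    ultimately show ?thesis by linarith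
  qed
  ultimately have "(real m + real m ^ 2) * \<epsilon> \<le> 2 * real h ^ 4 * (p ^ m / (1024 * real h ^ 8))"
    using assms(3) by (intro mult_mono) auto
  also have "\<dots> = p ^ m / (512 * real h ^ 4)"
    using h by (simp add: field_simps flip: power_add)
  also have "\<dots> \<le> p ^ m / 8"
  proof (rule divide_left_mono)
    show "8 \<le> 512 * real h ^ 4" using one_le_power[OF h, of 4] by linarith
  qed (use assms(1,5) in auto)
  finally show ?thesis .
qed

lemma noninjective_error_le:
  fixes p :: real and m h n :: nat
  assumes "0 < p" "real n \<ge> 4 * real h ^ (h + 3) / p ^ m" "1 \<le> h"
  shows "real (h * (h - 1)) * real n ^ (h - 1) \<le> p ^ m * real n ^ h / 8"
proof -
  have "2 * real (h * (h - 1)) \<le> real h ^ (h + 3)"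
  proof (cases "h = 1")
    case False
    then have "2 \<le> real h" using assms(3) by simp
    have "2 * real (h * (h - 1)) \<le> 2 * real h * real h" by (simp add: mult_left_mono)
    also have "\<dots> \<le> real h * real h * real h"
      using \<open>2 \<le> real h\<close> by (intro mult_right_mono) auto
    also have "\<dots> = real h ^ 3" by (simp add: power3_eq_cube)
    also have "\<dots> \<le> real h ^ (h + 3)"
      using \<open>2 \<le> real h\<close> by (intro power_increasing) auto
    finally show ?thesis .
  qed simp
  also have "\<dots> \<le> p ^ m * real n / 4"
    using assms(1,2) by (simp add: field_simps)
  finally have "8 * real (h * (h - 1)) \<le> p ^ m * real n" by simp
  then have "8 * real (h * (h - 1)) * real n ^ (h - 1) \<le> p ^ m * real n * real n ^ (h - 1)"
    by (intro mult_right_mono) auto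
  also have "\<dots> = p ^ m * real n ^ h"
    using assms(3) by (simp add: power_eq_if mult.assoc)
  finally show ?thesis by simp
qed

lemma embedding_count_arith:
  fixes p \<epsilon> \<delta> P :: real and m h n :: nat
  assumes p: "0 < p" "p \<le> 1" and P: "p ^ m \<le> P"
    and \<delta>: "0 \<le> \<delta>" "\<delta> \<le> 1 / (2 * real m)"
    and \<epsilon>: "0 \<le> \<epsilon>" "\<epsilon> \<le> (p ^ (m + 1) / (32 * real h ^ 4)) ^ 2"
    and n: "real n \<ge> 4 * real h ^ (h + 3) / p ^ m" and h: "1 \<le> h" "m \<le> h ^ 2"
  defines "N \<equiv> real n ^ h"
  shows "(1 - \<delta> * real m) / 2 * p ^ m * N
         \<le> P * N - real m * (\<epsilon> * N) - real m * (\<delta> * P * N + real m * (\<epsilon> * N))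
            - real (h * (h - 1)) * real n ^ (h - 1)"
proof -
  \<comment> \<open>For m = 0 the bound on \<delta> degenerates to \<delta> \<le> 0, since division by zero is zero in HOL.\<close>
  have \<delta>m: "\<delta> * real m \<le> 1 / 2"
    using \<delta> by (cases "m = 0") (auto simp: field_simps)
  have "0 \<le> N" unfolding N_def by simp
  have "(1 - \<delta> * real m) * p ^ m * N \<le> (1 - \<delta> * real m) * P * N"
    using P \<delta>m \<open>0 \<le> N\<close> by (intro mult_right_mono mult_left_mono) auto
  moreover have "(real m + real m ^ 2) * \<epsilon> * N \<le> p ^ m / 8 * N"
    using regularity_error_le[OF p \<epsilon> h] \<open>0 \<le> N\<close> by (intro mult_right_mono)
  moreover have "real (h * (h - 1)) * real n ^ (h - 1) \<le> p ^ m * N / 8"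
    unfolding N_def using noninjective_error_le[OF p(1) n h(1)] .
  moreover have "(1 - \<delta> * real m) / 2 * p ^ m * N \<le> (1 - \<delta> * real m) * p ^ m * N - p ^ m * N / 4"
  proof -
    have "0 \<le> (1 / 2 - \<delta> * real m) * (p ^ m * N)"
      using \<delta>m p \<open>0 \<le> N\<close> by (intro mult_nonneg_nonneg) auto
    moreover have "(1 - \<delta> * real m) * p ^ m * N - p ^ m * N / 4 - (1 - \<delta> * real m) / 2 * p ^ m * N
                   = (1 / 2 - \<delta> * real m) * (p ^ m * N) / 2"
      by (simp add: field_simps)
    ultimately show ?thesis by linarith
  qed
  moreover have "P * N - real m * (\<epsilon> * N) - real m * (\<delta> * P * N + real m * (\<epsilon> * N))
                 = (1 - \<delta> * real m) * P * N - (real m + real m ^ 2) * \<epsilon> * N"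
    by (simp add: algebra_simps power2_eq_square)
  ultimately show ?thesis by linarith
qed

lemma card_embeddings_le_card_copies:
  assumes "finite VH" "finite V" "\<And>x. x \<in> VH \<Longrightarrow> C x \<subseteq> V"
  shows "card {f \<in> PiE VH C. inj_on f VH \<and> (\<forall>e\<in>EH. f ` e \<in> E)} \<le> card (copies VH EH V E)"
proof (rule card_mono)
  have "copies VH EH V E \<subseteq> PiE VH (\<lambda>_. V)" by (auto simp: copies_def)
  then show "finite (copies VH EH V E)"
    by (rule finite_subset) (use assms(1,2) in \<open>simp add: finite_PiE\<close>)
  show "{f \<in> PiE VH C. inj_on f VH \<and> (\<forall>e\<in>EH. f ` e \<in> E)} \<subseteq> copies VH EH V E"
    using assms(3) by (auto simp: copies_def PiE_iff)
qed

lemma copy_induces_class_assignment: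
  assumes G': "eps_p_graph \<epsilon> p k U V E'" and sizes: "\<forall>i<k. card (U i) = n"
    and close: "\<forall>i<k. \<forall>j<k. i \<noteq> j \<and> density E' (U i) (U j) > 0 \<longrightarrow>
                  delta_close \<delta> (bip_edges E (U i) (U j)) (bip_edges E' (U i) (U j))"
    and H: "graph VH EH" and copy: "\<phi> \<in> copies VH EH V E'"
    and "0 < p" "0 \<le> \<epsilon>" "0 \<le> \<delta>"
  obtains C where "regular_class_assignment VH EH C E' E n \<epsilon> p \<delta>" "\<And>x. x \<in> VH \<Longrightarrow> C x \<subseteq> V"
proof -
  have "graph V E'" and V: "V = (\<Union>i<k. U i)" and disj: "\<forall>i<k. \<forall>j<k. i \<noteq> j \<longrightarrow> U i \<inter> U j = {}"
    and inside: "\<forall>e\<in>E'. \<forall>i<k. \<not> e \<subseteq> U i"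
    and pairs: "\<forall>i<k. \<forall>j<k. i \<noteq> j \<longrightarrow> bip_edges E' (U i) (U j) = {}
                  \<or> (eps_regular E' \<epsilon> (U i) (U j) \<and> density E' (U i) (U j) \<ge> p)"
    using G' unfolding eps_p_graph_def k_partite_def by blast+
  have "finite V" using \<open>graph V E'\<close> by (simp add: graph_def)
  have \<phi>: "\<And>x. x \<in> VH \<Longrightarrow> \<phi> x \<in> V" "\<And>e. e \<in> EH \<Longrightarrow> \<phi> ` e \<in> E'"
    using copy by (auto simp: copies_def)
  define c where "c x = (SOME i. i < k \<and> \<phi> x \<in> U i)" for x
  have c: "c x < k \<and> \<phi> x \<in> U (c x)" if x: "x \<in> VH" for x
  proof -
    obtain i where "i < k \<and> \<phi> x \<in> U i" using \<phi>(1)[OF x] V by blast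
    then show ?thesis unfolding c_def by (rule someI)
  qed
  have edge: "c x \<noteq> c y \<and> eps_regular E' \<epsilon> (U (c x)) (U (c y)) \<and> p \<le> density E' (U (c x)) (U (c y))"
    if "{x, y} \<in> EH" "x \<noteq> y" for x y
  proof -
    have xy: "x \<in> VH" "y \<in> VH" using H that(1) by (auto simp: graph_def)
    have "{\<phi> x, \<phi> y} \<in> E'" using \<phi>(2)[OF that(1)] by simp
    then have "c x \<noteq> c y" using inside c[OF xy(1)] c[OF xy(2)] by fastforce
    moreover have "{\<phi> x, \<phi> y} \<in> bip_edges E' (U (c x)) (U (c y))"
      using \<open>{\<phi> x, \<phi> y} \<in> E'\<close> c[OF xy(1)] c[OF xy(2)] by (auto simp: bip_edges_def)
    ultimately show ?thesis using pairs c[OF xy(1)] c[OF xy(2)] by blast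
  qed
  have CV: "U (c x) \<subseteq> V" if "x \<in> VH" for x using c[OF that] V by blast
  have "regular_class_assignment VH EH (\<lambda>x. U (c x)) E' E n \<epsilon> p \<delta>"
  proof unfold_locales
    show "graph VH EH" by (fact H)
    show "finite (U (c x))" if "x \<in> VH" for x using CV[OF that] \<open>finite V\<close> by (rule finite_subset)
    show "card (U (c x)) = n" if "x \<in> VH" for x using c[OF that] sizes by blast
    fix x y assume xy: "{x, y} \<in> EH" "x \<noteq> y"
    then have "x \<in> VH" "y \<in> VH" using H by (auto simp: graph_def)
    then show "U (c x) \<inter> U (c y) = {}" using disj c edge[OF xy] by blast
    show "eps_regular E' \<epsilon> (U (c x)) (U (c y))" "p \<le> density E' (U (c x)) (U (c y))"
      using edge[OF xy] by blast+
    show "delta_close \<delta> (bip_edges E (U (c x)) (U (c y))) (bip_edges E' (U (c x)) (U (c y)))"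
      using close c \<open>x \<in> VH\<close> \<open>y \<in> VH\<close> edge[OF xy] \<open>0 < p\<close> by (meson less_le_trans)
  qed (fact assms)+
  then show ?thesis using CV by (rule that)
qed

theorem lemma4p1:
  fixes VH :: "'b set" and EH :: "'b set set"
    and V :: "'a set" and E' :: "'a set set" and E :: "'a set set"
    and U :: "nat \<Rightarrow> 'a set" and k n h m :: nat and \<epsilon> p \<delta> :: real
  assumes H: "graph VH EH" and h: "h = card VH" and m: "m = card EH"
    and G': "eps_p_graph \<epsilon> p k U V E'"
    and sizes: "\<forall>i<k. card (U i) = n"
    and G: "graph V E"
    and close: "\<forall>i<k. \<forall>j<k. i \<noteq> j \<and> density E' (U i) (U j) > 0 \<longrightarrow>
                  delta_close \<delta> (bip_edges E (U i) (U j)) (bip_edges E' (U i) (U j))"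
    and eps_pos: "0 < \<epsilon>" and p_pos: "0 < p" and p_le: "p \<le> 1" and delta_nn: "0 \<le> \<delta>"
    and delta_le: "\<delta> \<le> 1 / (2 * real m)"
    and eps_le: "\<epsilon> \<le> (p ^ (m + 1) / (32 * real h ^ 4)) ^ 2"
    and n_ge: "real n \<ge> 4 * real h ^ (h + 3) / p ^ m"
    and contains: "copies VH EH V E' \<noteq> {}"
  shows "real (card (copies VH EH V E)) \<ge> (1 - \<delta> * real m) / 2 * p ^ m * real n ^ h"
proof -
  obtain \<phi> where "\<phi> \<in> copies VH EH V E'" using contains by blast
  then obtain C where RCA: "regular_class_assignment VH EH C E' E n \<epsilon> p \<delta>"
    and CV: "\<And>x. x \<in> VH \<Longrightarrow> C x \<subseteq> V"
    using copy_induces_class_assignment[OF G' sizes close H _ p_pos less_imp_le[OF eps_pos] delta_nn] by blast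
  interpret regular_class_assignment VH EH C E' E n \<epsilon> p \<delta> by (fact RCA)
  \<comment> \<open>h = 0 is excluded: the bound on \<epsilon> would collapse to 0, division by zero being zero.\<close>
  have "1 \<le> h" using eps_le eps_pos by (cases "h = 0") auto
  have "p ^ m \<le> (\<Prod>e\<in>EH. edge_density e)" using density_product_ge p_pos unfolding m by simp
  moreover have "m \<le> h ^ 2" using card_EH_le unfolding h m .
  ultimately have "(1 - \<delta> * real m) / 2 * p ^ m * real n ^ h
        \<le> (\<Prod>e\<in>EH. edge_density e) * real n ^ h - real m * (\<epsilon> * real n ^ h)
           - real m * (\<delta> * (\<Prod>e\<in>EH. edge_density e) * real n ^ h + real m * (\<epsilon> * real n ^ h))
           - real (h * (h - 1)) * real n ^ (h - 1)"
    using embedding_count_arith[OF p_pos p_le _ delta_nn delta_le less_imp_le[OF eps_pos] eps_le n_ge \<open>1 \<le> h\<close>]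
    by blast
  also have "\<dots> \<le> real (card {f \<in> PiE VH C. inj_on f VH \<and> (\<forall>e\<in>EH. f ` e \<in> E)})"
    using embedding_count_ge unfolding h m .
  also have "\<dots> \<le> real (card (copies VH EH V E))"
    using card_embeddings_le_card_copies[OF finite_VH _ CV] G by (simp add: graph_def)
  finally show ?thesis .
qed

end
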